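(* For every integer $m\ge 1$ a generalised golden ratio $\mathcal{G}(m)$ exists, and $$\mathcal{G}(m)=\begin{cases} k+1 & \text{if } m=2k,\\[2pt] \dfrac{k+1+\sqrt{k^{2}+6k+5}}{2} & \text{if } m=2k+1,\end{cases}$$ where $k$ is a nonnegative integer.
   Context: Let $m\in\mathbb{N}$ and $\beta\in(1,m+1]$. For $x\in[0,\frac{m}{\beta-1}]$ let $\Sigma_{\beta,m}(x)=\{(\epsilon_i)_{i=1}^\infty\in\{0,\ldots,m\}^{\mathbb{N}}:\sum_{i=1}^\infty \epsilon_i\beta^{-i}=x\}$ be the set of $\beta$-expansions of $x$. A real number $\mathcal{G}(m)$ is called a generalised golden ratio for $m$ if (i) for every $\beta\in(1,\mathcal{G}(m))$ the set $\Sigma_{\beta,m}(x)$ is uncountable for every $x\in(0,\frac{m}{\beta-1})$, and (ii) for every $\beta\in(\mathcal{G}(m),m+1]$ there exists $x\in(0,\frac{m}{\beta-1})$ with $|\Sigma_{\beta,m}(x)|=1$. *)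

theory Defs
  imports "HOL-Analysis.Analysis"
begin

text \<open>We index sequences from 0, so eps i is the (i+1)-th digit, weighted by beta^(-(i+1)).\<close>
definition expansions :: "real \<Rightarrow> nat \<Rightarrow> real \<Rightarrow> (nat \<Rightarrow> nat) set" where
  "expansions \<beta> m x = {\<epsilon>. (\<forall>i. \<epsilon> i \<le> m) \<and> (\<lambda>i. real (\<epsilon> i) / \<beta> ^ (i + 1)) sums x}"

definition gen_golden_ratio :: "nat \<Rightarrow> real \<Rightarrow> bool" where
  "gen_golden_ratio m G \<longleftrightarrow>
     (\<forall>\<beta>. 1 < \<beta> \<and> \<beta> < G \<and> \<beta> \<le> real m + 1 \<longrightarrow>
        (\<forall>x. 0 < x \<and> x < real m / (\<beta> - 1) \<longrightarrow> uncountable (expansions \<beta> m x))) \<and>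
     (\<forall>\<beta>. G < \<beta> \<and> \<beta> \<le> real m + 1 \<longrightarrow>
        (\<exists>x. 0 < x \<and> x < real m / (\<beta> - 1) \<and> card (expansions \<beta> m x) = 1))"

end

theory Submission
  imports Defs
begin

text \<open>Write \<open>L = m/(\<beta>-1)\<close> and \<open>T\<^sub>d y = \<beta> y - d\<close>. A digit sequence is an expansion of \<open>x\<close> iff
  applying the maps \<open>T\<^sub>d\<close> for its successive digits to \<open>x\<close> never leaves \<open>[0, L]\<close>.
  Below the generalised golden ratio every point of \<open>(0, L)\<close> is led by admissible maps into an
  overlap region \<open>d + 1 < \<beta> y < d + L\<close>, where both digits \<open>d\<close> and \<open>d + 1\<close> keep the orbit
  inside \<open>(0, L)\<close>. So every finite piece of an orbit can be continued in two different ways,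
  and diagonalising against an enumeration of the expansions produces a missing one.
  Above the generalised golden ratio the periodic sequence \<open>(k+1) k (k+1) k \<dots>\<close>
  (resp. \<open>k k k \<dots>\<close> for \<open>m = 2k\<close>) is the only expansion of its value: each of its tails has
  a value in \<open>(L - 1, 1)\<close>, so changing the first digit where another sequence deviates would
  leave \<open>[0, L]\<close>.\<close>

fun digit_path :: "real \<Rightarrow> nat \<Rightarrow> real \<Rightarrow> nat list \<Rightarrow> real \<Rightarrow> bool" where
  "digit_path \<beta> m y [] z \<longleftrightarrow> z = y"
| "digit_path \<beta> m y (d # w) z \<longleftrightarrow>
     d \<le> m \<and> 0 \<le> \<beta> * y - d \<and> \<beta> * y - d \<le> real m / (\<beta> - 1) \<and> digit_path \<beta> m (\<beta> * y - d) w z"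

lemma digit_path_append:
  "digit_path \<beta> m y (u @ v) z \<longleftrightarrow> (\<exists>t. digit_path \<beta> m y u t \<and> digit_path \<beta> m t v z)"
  by (induction u arbitrary: y) auto

lemma digit_path_digit_le: "digit_path \<beta> m y w z \<Longrightarrow> d \<in> set w \<Longrightarrow> d \<le> m"
  by (induction w arbitrary: y) auto

lemma digit_path_bounds:
  "digit_path \<beta> m y w z \<Longrightarrow> 0 \<le> y \<Longrightarrow> y \<le> real m / (\<beta> - 1) \<Longrightarrow> 0 \<le> z \<and> z \<le> real m / (\<beta> - 1)"
  by (induction w arbitrary: y) auto

lemma digit_path_value:
  assumes "digit_path \<beta> m y w z" "\<beta> \<noteq> 0"
  shows "y = (\<Sum>i<length w. real (w ! i) / \<beta> ^ (i + 1)) + z / \<beta> ^ length w"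
  using assms
proof (induction w arbitrary: y)
  case Nil
  then show ?case by simp
next
  case (Cons d w)
  then have IH: "\<beta> * y - d = (\<Sum>i<length w. real (w ! i) / \<beta> ^ (i + 1)) + z / \<beta> ^ length w"
    by simp
  have "(\<Sum>i<length (d # w). real ((d # w) ! i) / \<beta> ^ (i + 1))
      = d / \<beta> + (\<Sum>i<length w. real (w ! i) / \<beta> ^ (i + 1)) / \<beta>"
    by (simp add: sum.lessThan_Suc_shift sum_divide_distrib mult_ac del: sum.lessThan_Suc)
  also have "\<dots> = d / \<beta> + (\<beta> * y - d - z / \<beta> ^ length w) / \<beta>"
    using IH by simp
  finally show ?case
    using Cons.prems by (simp add: field_simps)
qed

lemma sums_if_digit_path_prefixes:
  assumes beta: "1 < \<beta>" and x: "0 \<le> x" "x \<le> real m / (\<beta> - 1)"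
    and prefixes: "\<And>N. \<exists>z. digit_path \<beta> m x (map e [0..<N]) z"
  shows "(\<lambda>i. real (e i) / \<beta> ^ (i + 1)) sums x"
proof -
  define L where "L = real m / (\<beta> - 1)"
  define S where "S N = (\<Sum>i<N. real (e i) / \<beta> ^ (i + 1))" for N
  have between: "x - L * (1 / \<beta>) ^ N \<le> S N \<and> S N \<le> x" for N
  proof -
    obtain z where z: "digit_path \<beta> m x (map e [0..<N]) z"
      using prefixes by blast
    have "0 \<le> z" "z \<le> L"
      using digit_path_bounds[OF z x] unfolding L_def by auto
    have "x = S N + z / \<beta> ^ N"
      using digit_path_value[OF z] beta unfolding S_def by simp
    moreover have "z / \<beta> ^ N \<le> L / \<beta> ^ N"
      using \<open>z \<le> L\<close> beta by (intro divide_right_mono) auto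
    moreover have "L / \<beta> ^ N = L * (1 / \<beta>) ^ N"
      by (simp add: power_one_over)
    moreover have "0 \<le> z / \<beta> ^ N"
      using \<open>0 \<le> z\<close> beta by simp
    ultimately show ?thesis
      by linarith
  qed
  have "(\<lambda>N. (1 / \<beta>) ^ N) \<longlonglongrightarrow> 0"
    using beta by (intro LIMSEQ_power_zero) simp
  then have lower: "(\<lambda>N. x - L * (1 / \<beta>) ^ N) \<longlonglongrightarrow> x"
    using tendsto_diff[OF tendsto_const tendsto_mult_right_zero] by fastforce
  have "S \<longlonglongrightarrow> x"
    by (rule tendsto_sandwich[OF _ _ lower tendsto_const]) (use between in simp_all)
  then show ?thesis
    unfolding sums_def S_def by simp
qed

definition branches :: "real \<Rightarrow> nat \<Rightarrow> real \<Rightarrow> bool" where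
  "branches \<beta> m y \<longleftrightarrow> (\<exists>w a b ya yb. a \<noteq> b \<and>
     digit_path \<beta> m y (w @ [a]) ya \<and> ya \<in> {0<..<real m / (\<beta> - 1)} \<and>
     digit_path \<beta> m y (w @ [b]) yb \<and> yb \<in> {0<..<real m / (\<beta> - 1)})"

lemma branches_Cons:
  fixes \<beta> y :: real and d :: nat
  assumes "d \<le> m" "0 \<le> \<beta> * y - d" "\<beta> * y - d \<le> real m / (\<beta> - 1)" "branches \<beta> m (\<beta> * y - d)"
  shows "branches \<beta> m y"
proof -
  obtain w a b ya yb where ab: "a \<noteq> b"
    "digit_path \<beta> m (\<beta> * y - d) (w @ [a]) ya" "ya \<in> {0<..<real m / (\<beta> - 1)}"
    "digit_path \<beta> m (\<beta> * y - d) (w @ [b]) yb" "yb \<in> {0<..<real m / (\<beta> - 1)}"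
    using assms(4) unfolding branches_def by blast
  have "digit_path \<beta> m y ((d # w) @ [a]) ya" "digit_path \<beta> m y ((d # w) @ [b]) yb"
    using ab assms(1-3) by simp_all
  then show ?thesis
    using ab unfolding branches_def by blast
qed

lemma branches_if_overlap:
  fixes \<beta> y :: real and d :: nat
  assumes "d + 1 \<le> m" "real d + 1 < \<beta> * y" "\<beta> * y < real d + real m / (\<beta> - 1)"
  shows "branches \<beta> m y"
proof -
  have "digit_path \<beta> m y ([] @ [d]) (\<beta> * y - d)" "digit_path \<beta> m y ([] @ [d + 1]) (\<beta> * y - (d + 1))"
    using assms by (simp; linarith)+
  moreover have "\<beta> * y - d \<in> {0<..<real m / (\<beta> - 1)}" "\<beta> * y - (d + 1) \<in> {0<..<real m / (\<beta> - 1)}"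
    using assms by simp_all
  moreover have "d \<noteq> d + 1"
    by simp
  ultimately show ?thesis
    unfolding branches_def by blast
qed

text \<open>A state is a word together with the point it leads to. The extension must disagree with
  \<open>g\<close> somewhere, \<open>g\<close> being indexed from the beginning of the whole word.\<close>

definition extends_avoiding ::
    "real \<Rightarrow> nat \<Rightarrow> (nat \<Rightarrow> nat) \<Rightarrow> nat list \<times> real \<Rightarrow> nat list \<times> real \<Rightarrow> bool" where
  "extends_avoiding \<beta> m g s t \<longleftrightarrow> (\<exists>w. fst t = fst s @ w \<and> w \<noteq> [] \<and>
     digit_path \<beta> m (snd s) w (snd t) \<and> snd t \<in> {0<..<real m / (\<beta> - 1)} \<and>
     (\<exists>i<length w. w ! i \<noteq> g (length (fst s) + i)))"

primrec diagonal_path :: "real \<Rightarrow> nat \<Rightarrow> (nat \<Rightarrow> nat \<Rightarrow> nat) \<Rightarrow> real \<Rightarrow> nat \<Rightarrow> nat list \<times> real" where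
  "diagonal_path \<beta> m f x 0 = ([], x)"
| "diagonal_path \<beta> m f x (Suc j) = (SOME t. extends_avoiding \<beta> m (f j) (diagonal_path \<beta> m f x j) t)"

lemma extends_avoiding_if_branches:
  assumes "branches \<beta> m (snd s)"
  shows "\<exists>t. extends_avoiding \<beta> m g s t"
proof -
  obtain w a b ya yb where ab: "a \<noteq> b"
    "digit_path \<beta> m (snd s) (w @ [a]) ya" "ya \<in> {0<..<real m / (\<beta> - 1)}"
    "digit_path \<beta> m (snd s) (w @ [b]) yb" "yb \<in> {0<..<real m / (\<beta> - 1)}"
    using assms unfolding branches_def by blast
  let ?n = "length (fst s) + length w"
  obtain c y where "c = a \<and> y = ya \<or> c = b \<and> y = yb" and "c \<noteq> g ?n"
    using ab(1) by blast
  then have "extends_avoiding \<beta> m g s (fst s @ w @ [c], y)"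
    unfolding extends_avoiding_def using ab by (auto intro!: exI[of _ "length w"])
  then show ?thesis ..
qed

context
  fixes \<beta> :: real and m :: nat and x :: real
  assumes beta: "1 < \<beta>"
    and branching: "\<And>y. 0 < y \<Longrightarrow> y < real m / (\<beta> - 1) \<Longrightarrow> branches \<beta> m y"
    and x: "0 < x" "x < real m / (\<beta> - 1)"
begin

lemma diagonal_path_Suc:
  "extends_avoiding \<beta> m (f j) (diagonal_path \<beta> m f x j) (diagonal_path \<beta> m f x (Suc j))"
proof -
  have "snd (diagonal_path \<beta> m f x j) \<in> {0<..<real m / (\<beta> - 1)}"
  proof (induction j)
    case 0
    show ?case using x by simp
  next
    case (Suc j)
    then have "\<exists>t. extends_avoiding \<beta> m (f j) (diagonal_path \<beta> m f x j) t"
      by (intro extends_avoiding_if_branches branching) auto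
    then have "extends_avoiding \<beta> m (f j) (diagonal_path \<beta> m f x j) (diagonal_path \<beta> m f x (Suc j))"
      unfolding diagonal_path.simps by (rule someI_ex)
    then show ?case
      unfolding extends_avoiding_def by blast
  qed
  then have "\<exists>t. extends_avoiding \<beta> m (f j) (diagonal_path \<beta> m f x j) t"
    by (intro extends_avoiding_if_branches branching) auto
  then show ?thesis
    unfolding diagonal_path.simps by (rule someI_ex)
qed

lemma diagonal_path_prefix:
  "j \<le> k \<Longrightarrow> \<exists>u. fst (diagonal_path \<beta> m f x k) = fst (diagonal_path \<beta> m f x j) @ u"
proof (induction k rule: dec_induct)
  case (step k)
  then show ?case
    using diagonal_path_Suc[of f k] unfolding extends_avoiding_def by auto
qed simp

lemma diagonal_path_digit_path:
  "digit_path \<beta> m x (fst (diagonal_path \<beta> m f x j)) (snd (diagonal_path \<beta> m f x j)) \<and>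
   j \<le> length (fst (diagonal_path \<beta> m f x j))"
proof (induction j)
  case (Suc j)
  obtain w where "fst (diagonal_path \<beta> m f x (Suc j)) = fst (diagonal_path \<beta> m f x j) @ w" "w \<noteq> []"
    "digit_path \<beta> m (snd (diagonal_path \<beta> m f x j)) w (snd (diagonal_path \<beta> m f x (Suc j)))"
    using diagonal_path_Suc[of f j] unfolding extends_avoiding_def by blast
  then show ?case
    using Suc by (cases w) (auto simp: digit_path_append)
qed simp

lemma diagonal_path_differs:
  "\<exists>i<length (fst (diagonal_path \<beta> m f x (Suc j))). fst (diagonal_path \<beta> m f x (Suc j)) ! i \<noteq> f j i"
proof -
  obtain w i where "fst (diagonal_path \<beta> m f x (Suc j)) = fst (diagonal_path \<beta> m f x j) @ w"
    "i < length w" "w ! i \<noteq> f j (length (fst (diagonal_path \<beta> m f x j)) + i)"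
    using diagonal_path_Suc[of f j] unfolding extends_avoiding_def by blast
  then show ?thesis
    by (intro exI[of _ "length (fst (diagonal_path \<beta> m f x j)) + i"]) (simp add: nth_append)
qed

text \<open>The limit of the diagonal paths built against an enumeration of the expansions is an
  expansion that is not enumerated.\<close>

lemma uncountable_expansions_if_branching: "uncountable (expansions \<beta> m x)"
proof
  assume countable: "countable (expansions \<beta> m x)"
  define f where "f = from_nat_into (expansions \<beta> m x)"
  define P where "P j = fst (diagonal_path \<beta> m f x j)" for j
  define e where "e i = P (Suc i) ! i" for i
  have long: "j \<le> length (P j)" for j
    using diagonal_path_digit_path unfolding P_def by blast
  have e_nth: "e i = P j ! i" if "i < length (P j)" for i j
  proof -
    obtain u v where "P (max j (Suc i)) = P j @ u" "P (max j (Suc i)) = P (Suc i) @ v"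
      using diagonal_path_prefix unfolding P_def by (metis max.cobounded1 max.cobounded2)
    then show ?thesis
      using that long[of "Suc i"] unfolding e_def by (metis Suc_le_eq nth_append)
  qed
  have prefix: "map e [0..<N] = take N (P N)" for N
    using e_nth long[of N] by (intro nth_equalityI) auto
  have paths: "\<exists>z. digit_path \<beta> m x (map e [0..<N]) z" for N
    using diagonal_path_digit_path[of f N] unfolding prefix P_def
    by (metis append_take_drop_id digit_path_append)
  have "e i \<le> m" for i
    using paths[of "Suc i"] digit_path_digit_le by fastforce
  moreover have "(\<lambda>i. real (e i) / \<beta> ^ (i + 1)) sums x"
    using sums_if_digit_path_prefixes[OF beta _ _ paths] x by simp
  ultimately have "e \<in> expansions \<beta> m x"
    unfolding expansions_def by simp
  moreover have "e \<noteq> f j" for j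
    using diagonal_path_differs[of f j] e_nth unfolding P_def by metis
  moreover have "range f = expansions \<beta> m x"
    using calculation(1) countable unfolding f_def by (intro range_from_nat_into) auto
  ultimately show False
    by auto
qed

end

text \<open>With \<open>L = m/(\<beta>-1)\<close>, hypothesis \<open>upper\<close> keeps the points of \<open>[L - 1, L]\<close> out of the bottom
  region \<open>\<beta> y \<le> 1\<close>. If \<open>L \<le> 2\<close> the overlap regions \<open>(d + 1, d + L)\<close> need not cover the middle
  region \<open>(1, m - 1 + L)\<close>; hypothesis \<open>gap\<close> says that the points of \<open>[L - 1, 1]\<close>, reached from those
  falling between two overlaps, are all sent into the overlap region of one pair \<open>k, k + 1\<close>.\<close>

context
  fixes \<beta> :: real and m :: nat
  assumes beta: "1 < \<beta>"
    and upper: "1 < \<beta> * (real m / (\<beta> - 1) - 1)"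
    and gap: "real m / (\<beta> - 1) \<le> 2 \<Longrightarrow> \<exists>k::nat. k + 1 \<le> m \<and>
      real k + 1 < \<beta> * (real m / (\<beta> - 1) - 1) \<and> \<beta> < real k + real m / (\<beta> - 1)"
begin

lemma one_less_max_value: "1 < real m / (\<beta> - 1)"
proof -
  have "0 < \<beta> * (real m / (\<beta> - 1) - 1)"
    using upper by linarith
  then show ?thesis
    using beta by (simp add: zero_less_mult_iff)
qed

lemma one_le_m: "1 \<le> m"
  using one_less_max_value beta by (cases m) auto

lemma beta_mult_max_value: "\<beta> * (real m / (\<beta> - 1)) = real m + real m / (\<beta> - 1)"
  using beta by (simp add: field_simps)

lemma branches_mid:
  assumes "0 < y" "y < real m / (\<beta> - 1)" "1 < \<beta> * y" "\<beta> * y < real m - 1 + real m / (\<beta> - 1)"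
  shows "branches \<beta> m y"
proof -
  define d where "d = nat (\<lceil>\<beta> * y\<rceil> - 2)"
  have "\<lceil>\<beta> * y\<rceil> \<ge> 2"
    using assms(3) by (simp add: le_ceiling_iff)
  then have d: "real d + 1 < \<beta> * y" "\<beta> * y \<le> real d + 2"
    unfolding d_def using ceiling_correct[of "\<beta> * y"] by (simp_all add: of_nat_diff)
  show ?thesis
  proof (cases "d + 1 \<le> m")
    case True
    show ?thesis
    proof (cases "\<beta> * y < real d + real m / (\<beta> - 1)")
      case True
      then show ?thesis
        using branches_if_overlap \<open>d + 1 \<le> m\<close> d by blast
    next
      case False
      define y' where "y' = \<beta> * y - real (d + 1)"
      have "real m / (\<beta> - 1) - 1 \<le> y'" "y' \<le> 1"
        using False d unfolding y'_def by auto
      moreover obtain k :: nat where k: "k + 1 \<le> m"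
        "real k + 1 < \<beta> * (real m / (\<beta> - 1) - 1)" "\<beta> < real k + real m / (\<beta> - 1)"
        using gap False d by force
      moreover have "\<beta> * (real m / (\<beta> - 1) - 1) \<le> \<beta> * y'" "\<beta> * y' \<le> \<beta>"
        using calculation(1,2) beta by simp_all
      ultimately have "branches \<beta> m y'"
        using branches_if_overlap[of k m \<beta> y'] by linarith
      then show ?thesis
        using branches_Cons[of "d + 1" m \<beta> y] \<open>d + 1 \<le> m\<close> \<open>real m / (\<beta> - 1) - 1 \<le> y'\<close>
          \<open>y' \<le> 1\<close> one_less_max_value
        unfolding y'_def by auto
    qed
  next
    case False
    then have "real (m - 1) + 1 < \<beta> * y" "\<beta> * y < real (m - 1) + real m / (\<beta> - 1)"
      using d assms(4) one_less_max_value by (auto simp: of_nat_diff)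
    moreover have "m - 1 + 1 \<le> m"
      using one_le_m by simp
    ultimately show ?thesis
      using branches_if_overlap by blast
  qed
qed

text \<open>Near \<open>L = m/(\<beta>-1)\<close> only the digit \<open>m\<close> is admissible, and \<open>L\<close> is a repelling fixed point
  of \<open>y \<mapsto> \<beta> y - m\<close>: the distance to \<open>L\<close> grows by the factor \<open>\<beta>\<close> until \<open>\<beta> y\<close> drops below
  \<open>m - 1 + L\<close>. The exponent \<open>n\<close> bounds the number of steps this takes.\<close>

lemma branches_top_pow:
  assumes "0 < y" "y < real m / (\<beta> - 1)" "real m - 1 + real m / (\<beta> - 1) \<le> \<beta> * y"
    and "1 < \<beta> ^ n * (real m / (\<beta> - 1) - y)"
  shows "branches \<beta> m y"
  using assms
proof (induction n arbitrary: y)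
  case 0
  then have "real m / (\<beta> - 1) - y < \<beta> * (real m / (\<beta> - 1) - y)"
    using beta by simp
  then show ?case
    using 0 beta_mult_max_value by (simp add: algebra_simps)
next
  case (Suc n)
  define y' where "y' = \<beta> * y - real m"
  have dist: "real m / (\<beta> - 1) - y' = \<beta> * (real m / (\<beta> - 1) - y)"
    using beta_mult_max_value unfolding y'_def by (simp add: algebra_simps)
  have "0 < \<beta> * (real m / (\<beta> - 1) - y)"
    using beta Suc.prems(2) by simp
  then have "y' < real m / (\<beta> - 1)"
    using dist by linarith
  have "real m / (\<beta> - 1) - 1 \<le> y'"
    using Suc.prems(3) unfolding y'_def by simp
  moreover have "\<beta> * (real m / (\<beta> - 1) - 1) \<le> \<beta> * y'"
    using calculation beta by simp
  ultimately have "0 < y'" "1 < \<beta> * y'"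
    using one_less_max_value upper by linarith+
  have "branches \<beta> m y'"
  proof (cases "real m - 1 + real m / (\<beta> - 1) \<le> \<beta> * y'")
    case True
    then show ?thesis
      using Suc.IH \<open>0 < y'\<close> \<open>y' < real m / (\<beta> - 1)\<close> Suc.prems(4) dist by (simp add: mult_ac)
  next
    case False
    then show ?thesis
      using branches_mid \<open>0 < y'\<close> \<open>y' < real m / (\<beta> - 1)\<close> \<open>1 < \<beta> * y'\<close> by simp
  qed
  then show ?case
    using branches_Cons[of m m \<beta> y] \<open>0 < y'\<close> \<open>y' < real m / (\<beta> - 1)\<close> unfolding y'_def by simp
qed

lemma branches_above_one:
  assumes "0 < y" "y < real m / (\<beta> - 1)" "1 < \<beta> * y"
  shows "branches \<beta> m y"
proof (cases "real m - 1 + real m / (\<beta> - 1) \<le> \<beta> * y")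
  case True
  obtain n where "1 / (real m / (\<beta> - 1) - y) < \<beta> ^ n"
    using real_arch_pow[OF beta] by blast
  then have "1 < \<beta> ^ n * (real m / (\<beta> - 1) - y)"
    using assms(2) by (simp add: field_simps)
  then show ?thesis
    using branches_top_pow assms True by blast
next
  case False
  then show ?thesis
    using branches_mid assms by simp
qed

lemma branches_bottom_pow:
  assumes "0 < y" "\<beta> * y \<le> 1" "1 < \<beta> ^ n * y"
  shows "branches \<beta> m y"
  using assms
proof (induction n arbitrary: y)
  case 0
  then have "y < \<beta> * y"
    using beta by simp
  with 0 have False
    by simp
  then show ?case ..
next
  case (Suc n)
  have "0 < \<beta> * y"
    using Suc.prems(1) beta by simp
  moreover have "\<beta> * y < real m / (\<beta> - 1)"
    using Suc.prems(2) one_less_max_value by linarith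
  moreover have "branches \<beta> m (\<beta> * y)"
  proof (cases "\<beta> * (\<beta> * y) \<le> 1")
    case True
    then show ?thesis
      using Suc.IH Suc.prems(3) \<open>0 < \<beta> * y\<close> by (simp add: mult_ac)
  next
    case False
    then show ?thesis
      using branches_above_one \<open>0 < \<beta> * y\<close> \<open>\<beta> * y < real m / (\<beta> - 1)\<close> by simp
  qed
  ultimately show ?case
    using branches_Cons[of 0 m \<beta> y] by simp
qed

lemma branches_interior:
  assumes "0 < y" "y < real m / (\<beta> - 1)"
  shows "branches \<beta> m y"
proof (cases "\<beta> * y \<le> 1")
  case True
  obtain n where "1 / y < \<beta> ^ n"
    using real_arch_pow[OF beta] by blast
  then have "1 < \<beta> ^ n * y"
    using assms(1) by (simp add: field_simps)
  then show ?thesis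
    using branches_bottom_pow assms(1) True by blast
next
  case False
  then show ?thesis
    using branches_above_one assms by simp
qed

lemma uncountable_expansions_interior:
  assumes "0 < x" "x < real m / (\<beta> - 1)"
  shows "uncountable (expansions \<beta> m x)"
  using uncountable_expansions_if_branching[OF beta branches_interior assms] .

end

lemma sums_geometric_digits:
  fixes \<beta> c :: real
  assumes "1 < \<beta>"
  shows "(\<lambda>i. c / \<beta> ^ (i + 1)) sums (c / (\<beta> - 1))"
proof -
  have "(\<lambda>i. (c / \<beta>) * (1 / \<beta>) ^ i) sums ((c / \<beta>) * (1 / (1 - 1 / \<beta>)))"
    using assms by (intro sums_mult geometric_sums) simp
  moreover have "(c / \<beta>) * (1 / (1 - 1 / \<beta>)) = c / (\<beta> - 1)"
    using assms by (simp add: field_simps)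
  moreover have "(\<lambda>i. (c / \<beta>) * (1 / \<beta>) ^ i) = (\<lambda>i. c / \<beta> ^ (i + 1))"
    by (simp add: power_one_over)
  ultimately show ?thesis
    by metis
qed

lemma expansion_value_bounds:
  fixes \<beta> :: real
  assumes "1 < \<beta>" "\<And>i. e i \<le> m" "(\<lambda>i. real (e i) / \<beta> ^ (i + 1)) sums t"
  shows "0 \<le> t \<and> t \<le> real m / (\<beta> - 1)"
proof
  show "0 \<le> t"
    using assms by (intro sums_le[OF _ sums_zero assms(3)]) simp
  show "t \<le> real m / (\<beta> - 1)"
    using assms
    by (intro sums_le[OF _ assms(3) sums_geometric_digits]) (auto intro: divide_right_mono)
qed

lemma expansion_tail_sums:
  fixes \<beta> :: real
  assumes "1 < \<beta>" "(\<lambda>i. real (e i) / \<beta> ^ (i + 1)) sums x"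
  shows "(\<lambda>i. real (e (n + 1 + i)) / \<beta> ^ (i + 1)) sums
    (\<beta> ^ (n + 1) * (x - (\<Sum>i<n. real (e i) / \<beta> ^ (i + 1))) - real (e n))"
proof -
  have "(\<lambda>i. \<beta> ^ (n + 1) * (real (e (i + Suc n)) / \<beta> ^ (i + Suc n + 1))) sums
      (\<beta> ^ (n + 1) * (x - (\<Sum>i<Suc n. real (e i) / \<beta> ^ (i + 1))))"
    using sums_mult[OF sums_split_initial_segment[OF assms(2)]] .
  moreover have "\<beta> ^ (n + 1) * (real (e (i + Suc n)) / \<beta> ^ (i + Suc n + 1))
      = real (e (n + 1 + i)) / \<beta> ^ (i + 1)" for i
    using assms(1) by (simp add: power_add field_simps add_ac)
  moreover have "\<beta> ^ (n + 1) * (x - (\<Sum>i<Suc n. real (e i) / \<beta> ^ (i + 1)))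
      = \<beta> ^ (n + 1) * (x - (\<Sum>i<n. real (e i) / \<beta> ^ (i + 1))) - real (e n)"
    using assms(1) by (simp add: algebra_simps)
  ultimately show ?thesis
    by simp
qed

text \<open>If every tail of \<open>c\<close> lies strictly between \<open>m/(\<beta>-1) - 1\<close> and \<open>1\<close>, then changing the
  first digit where another expansion differs from \<open>c\<close> would push the corresponding tail of that
  expansion out of \<open>[0, m/(\<beta>-1)]\<close>.\<close>

lemma expansions_eq_singleton:
  fixes \<beta> :: real
  assumes beta: "1 < \<beta>" and digits: "\<And>i. c i \<le> m" and c: "(\<lambda>i. real (c i) / \<beta> ^ (i + 1)) sums x"
    and tails: "\<And>n. \<exists>t. (\<lambda>i. real (c (n + 1 + i)) / \<beta> ^ (i + 1)) sums t \<and>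
      real m / (\<beta> - 1) - 1 < t \<and> t < 1"
  shows "expansions \<beta> m x = {c}"
proof (intro equalityI subsetI)
  fix d
  assume "d \<in> expansions \<beta> m x"
  then have d_digits: "\<And>i. d i \<le> m" and d: "(\<lambda>i. real (d i) / \<beta> ^ (i + 1)) sums x"
    unfolding expansions_def by auto
  show "d \<in> {c}"
  proof (rule ccontr)
    assume "d \<notin> {c}"
    then obtain n where n: "d n \<noteq> c n" "\<And>i. i < n \<Longrightarrow> d i = c i"
      using exists_least_iff[of "\<lambda>i. d i \<noteq> c i"] by auto
    define r where "r = \<beta> ^ (n + 1) * (x - (\<Sum>i<n. real (c i) / \<beta> ^ (i + 1)))"
    have "(\<lambda>i. real (d (n + 1 + i)) / \<beta> ^ (i + 1)) sums (r - d n)"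
      using expansion_tail_sums[OF beta d, of n] n(2) unfolding r_def by simp
    then have "0 \<le> r - d n" "r - d n \<le> real m / (\<beta> - 1)"
      using expansion_value_bounds[OF beta d_digits] by blast+
    moreover obtain t where "(\<lambda>i. real (c (n + 1 + i)) / \<beta> ^ (i + 1)) sums t"
      "real m / (\<beta> - 1) - 1 < t" "t < 1"
      using tails by blast
    moreover from this(1) have "t = r - c n"
      using expansion_tail_sums[OF beta c, of n] unfolding r_def by (rule sums_unique2)
    ultimately show False
      using n(1) by (cases "d n < c n") (simp_all add: nat_less_real_le linorder_neq_iff)
  qed
qed (use digits c in \<open>simp add: expansions_def\<close>)

definition alternating :: "nat \<Rightarrow> nat \<Rightarrow> nat \<Rightarrow> nat" where
  "alternating a b i = (if even i then a else b)"

lemma alternating_0 [simp]: "alternating a b 0 = a"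
  and alternating_Suc [simp]: "alternating a b (Suc i) = alternating b a i"
  by (simp_all add: alternating_def)

lemma sums_digit_Cons:
  fixes \<beta> :: real
  assumes "\<beta> \<noteq> 0" "(\<lambda>i. real (e (Suc i)) / \<beta> ^ (i + 1)) sums t"
  shows "(\<lambda>i. real (e i) / \<beta> ^ (i + 1)) sums ((real (e 0) + t) / \<beta>)"
proof -
  have "(\<lambda>i. real (e (Suc i)) / \<beta> ^ (Suc i + 1)) sums (t / \<beta>)"
    using sums_divide[OF assms(2), of \<beta>] by (simp add: mult_ac)
  then show ?thesis
    by (subst (asm) sums_Suc_iff) (simp add: add_divide_distrib add.commute)
qed

lemma alternating_sums:
  fixes \<beta> :: real
  assumes beta: "1 < \<beta>"
  shows "(\<lambda>i. real (alternating a b i) / \<beta> ^ (i + 1)) sums ((a * \<beta> + b) / (\<beta>\<^sup>2 - 1))"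
proof -
  have "summable (\<lambda>i. real (alternating a b i) / \<beta> ^ (i + 1))" for a b
  proof (rule summable_comparison_test')
    show "summable (\<lambda>i. real (a + b) / \<beta> ^ (i + 1))"
      using sums_geometric_digits[OF beta] by (rule sums_summable)
    show "norm (real (alternating a b i) / \<beta> ^ (i + 1)) \<le> real (a + b) / \<beta> ^ (i + 1)" for i
      using beta by (auto simp: alternating_def intro!: divide_right_mono)
  qed
  then obtain s t where
    s: "(\<lambda>i. real (alternating a b i) / \<beta> ^ (i + 1)) sums s" and
    t: "(\<lambda>i. real (alternating b a i) / \<beta> ^ (i + 1)) sums t"
    using summable_sums by blast
  have "s = (a + t) / \<beta>" "t = (b + s) / \<beta>"
    using sums_digit_Cons[of \<beta> "alternating a b"] sums_digit_Cons[of \<beta> "alternating b a"] s t beta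
    by (auto intro: sums_unique2)
  then have "s * (\<beta>\<^sup>2 - 1) = a * \<beta> + b"
    using beta by (simp add: field_simps power2_eq_square)
  moreover have "\<beta>\<^sup>2 - 1 \<noteq> 0"
    using one_less_power[OF beta, of 2] by simp
  ultimately have "s = (a * \<beta> + b) / (\<beta>\<^sup>2 - 1)"
    by (simp add: eq_divide_eq)
  then show ?thesis
    using s by simp
qed

lemma alternating_shift:
  "alternating a b (n + 1 + i) = (if even n then alternating b a i else alternating a b i)"
  by (simp add: alternating_def)

lemma alternating_expansion_unique:
  fixes \<beta> :: real and a b m :: nat
  assumes beta: "1 < \<beta>" and m: "a + b = m" and a: "0 < a"
    and ab: "a * \<beta> + b < \<beta>\<^sup>2 - 1" and ba: "b * \<beta> + a < \<beta>\<^sup>2 - 1"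
  shows "\<exists>x. 0 < x \<and> x < real m / (\<beta> - 1) \<and> card (expansions \<beta> m x) = 1"
proof -
  define v where "v a b = (real a * \<beta> + real b) / (\<beta>\<^sup>2 - 1)" for a b :: nat
  have "0 < \<beta>\<^sup>2 - 1"
    using one_less_power[OF beta, of 2] by simp
  moreover have "0 < real a * \<beta> + b" "0 < real b * \<beta> + a"
    using a beta by (simp_all add: add_pos_nonneg add_nonneg_pos)
  ultimately have "v a b < 1" "v b a < 1" "0 < v a b" "0 < v b a"
    unfolding v_def using ab ba by simp_all
  moreover have "v a b + v b a = real m / (\<beta> - 1)"
  proof -
    have "\<beta>\<^sup>2 - 1 = (\<beta> - 1) * (\<beta> + 1)"
      by (simp add: algebra_simps power2_eq_square)
    then have "v a b + v b a = (real m * (\<beta> + 1)) / ((\<beta> - 1) * (\<beta> + 1))"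
      unfolding v_def m[symmetric] by (simp add: add_divide_distrib[symmetric] algebra_simps)
    then show ?thesis
      using beta by simp
  qed
  ultimately have tails: "real m / (\<beta> - 1) - 1 < v c d \<and> v c d < 1" if "{c, d} = {a, b}" for c d
    using that by (auto simp: doubleton_eq_iff)
  have "expansions \<beta> m (v a b) = {alternating a b}"
  proof (rule expansions_eq_singleton[OF beta])
    show "alternating a b i \<le> m" for i
      using m by (simp add: alternating_def)
    show "(\<lambda>i. real (alternating a b i) / \<beta> ^ (i + 1)) sums v a b"
      unfolding v_def by (rule alternating_sums[OF beta])
    show "\<exists>t. (\<lambda>i. real (alternating a b (n + 1 + i)) / \<beta> ^ (i + 1)) sums t \<and>
      real m / (\<beta> - 1) - 1 < t \<and> t < 1" for n
      using alternating_sums[OF beta, of b a] alternating_sums[OF beta, of a b] tails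
      unfolding alternating_shift v_def by (cases "even n") (auto simp: insert_commute)
  qed
  then show ?thesis
    using \<open>0 < v a b\<close> \<open>0 < v b a\<close> \<open>v a b + v b a = real m / (\<beta> - 1)\<close>
    by (intro exI[of _ "v a b"]) auto
qed

lemma uncountable_expansions_even:
  fixes \<beta> x :: real and k :: nat
  assumes beta: "1 < \<beta>" "\<beta> < real k + 1" and x: "0 < x" "x < real (2 * k) / (\<beta> - 1)"
  shows "uncountable (expansions \<beta> (2 * k) x)"
proof -
  have "2 < real (2 * k) / (\<beta> - 1)"
    using beta by (simp add: pos_less_divide_eq)
  moreover from this have "1 < \<beta> * (real (2 * k) / (\<beta> - 1) - 1)"
    using beta mult_strict_mono[of 1 \<beta> 1 "real (2 * k) / (\<beta> - 1) - 1"] by simp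
  ultimately show ?thesis
    using uncountable_expansions_interior[OF beta(1)] x by simp
qed

lemma unique_expansion_even:
  fixes \<beta> :: real and k :: nat
  assumes "1 \<le> k" "real k + 1 < \<beta>"
  shows "\<exists>x. 0 < x \<and> x < real (2 * k) / (\<beta> - 1) \<and> card (expansions \<beta> (2 * k) x) = 1"
proof (rule alternating_expansion_unique)
  have "real k * (\<beta> + 1) < (\<beta> - 1) * (\<beta> + 1)"
    using assms by (intro mult_strict_right_mono) auto
  then show "real k * \<beta> + real k < \<beta>\<^sup>2 - 1"
    by (simp add: algebra_simps power2_eq_square)
  then show "real k * \<beta> + real k < \<beta>\<^sup>2 - 1" .
qed (use assms in auto)

lemma gen_golden_ratio_even:
  fixes k :: nat
  assumes "1 \<le> k"
  shows "gen_golden_ratio (2 * k) (real k + 1)"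
  unfolding gen_golden_ratio_def
  using uncountable_expansions_even unique_expansion_even[OF assms] assms by auto

lemma odd_golden_ratio_factor:
  fixes k :: nat and \<beta> :: real
  defines "s \<equiv> sqrt (real k ^ 2 + 6 * real k + 5)"
  shows "\<beta>\<^sup>2 - (real k + 1) * (\<beta> + 1) = (\<beta> - (real k + 1 + s) / 2) * (\<beta> + (s - real k - 1) / 2)"
    and "real k + 1 < s"
proof -
  have "s\<^sup>2 = real k ^ 2 + 6 * real k + 5"
    unfolding s_def by simp
  then show "\<beta>\<^sup>2 - (real k + 1) * (\<beta> + 1) = (\<beta> - (real k + 1 + s) / 2) * (\<beta> + (s - real k - 1) / 2)"
    by (simp add: field_simps power2_eq_square)
  have "(real k + 1)\<^sup>2 < real k ^ 2 + 6 * real k + 5"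
    by (simp add: algebra_simps power2_eq_square)
  then show "real k + 1 < s"
    unfolding s_def by (simp add: real_less_rsqrt)
qed

lemma uncountable_expansions_odd:
  fixes \<beta> x :: real and k :: nat
  assumes beta: "1 < \<beta>" and below: "\<beta>\<^sup>2 < (real k + 1) * (\<beta> + 1)"
    and x: "0 < x" "x < real (2 * k + 1) / (\<beta> - 1)"
  shows "uncountable (expansions \<beta> (2 * k + 1) x)"
proof -
  define L where "L = real (2 * k + 1) / (\<beta> - 1)"
  have "(\<beta> - real k) * (\<beta> - 1) < real (2 * k + 1)"
    using below by (simp add: algebra_simps power2_eq_square)
  then have "\<beta> - real k < L"
    unfolding L_def using beta by (simp add: pos_less_divide_eq)
  then have "\<beta> < real k + L"
    by simp
  moreover have "\<beta> * L = real (2 * k + 1) + L"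
    unfolding L_def using beta by (simp add: field_simps)
  ultimately have "real k + 1 < \<beta> * (L - 1)"
    by (simp add: algebra_simps)
  show ?thesis
  proof (rule uncountable_expansions_interior[OF beta])
    show "1 < \<beta> * (real (2 * k + 1) / (\<beta> - 1) - 1)"
      using \<open>real k + 1 < \<beta> * (L - 1)\<close> unfolding L_def by simp
    show "\<exists>k'::nat. k' + 1 \<le> 2 * k + 1 \<and> real k' + 1 < \<beta> * (real (2 * k + 1) / (\<beta> - 1) - 1) \<and>
        \<beta> < real k' + real (2 * k + 1) / (\<beta> - 1)"
      using \<open>real k + 1 < \<beta> * (L - 1)\<close> \<open>\<beta> < real k + L\<close> unfolding L_def by (intro exI[of _ k]) simp
  qed (use x in simp_all)
qed

lemma unique_expansion_odd:
  fixes \<beta> :: real and k :: nat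
  assumes beta: "1 < \<beta>" and above: "(real k + 1) * (\<beta> + 1) < \<beta>\<^sup>2"
  shows "\<exists>x. 0 < x \<and> x < real (2 * k + 1) / (\<beta> - 1) \<and> card (expansions \<beta> (2 * k + 1) x) = 1"
proof (rule alternating_expansion_unique[OF beta])
  show "real (k + 1) * \<beta> + real k < \<beta>\<^sup>2 - 1"
    using above by (simp add: algebra_simps)
  have "real k * \<beta> + real (k + 1) + 1 \<le> (real k + 1) * (\<beta> + 1)"
    using beta by (simp add: algebra_simps)
  then show "real k * \<beta> + real (k + 1) < \<beta>\<^sup>2 - 1"
    using above by linarith
qed simp_all

lemma gen_golden_ratio_odd:
  fixes k :: nat
  shows "gen_golden_ratio (2 * k + 1) ((real k + 1 + sqrt (real k ^ 2 + 6 * real k + 5)) / 2)"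
proof -
  define s where "s = sqrt (real k ^ 2 + 6 * real k + 5)"
  have "real k + 1 < s"
    using odd_golden_ratio_factor(2)[where k = k] unfolding s_def .
  have factor: "\<beta>\<^sup>2 - (real k + 1) * (\<beta> + 1)
      = (\<beta> - (real k + 1 + s) / 2) * (\<beta> + (s - real k - 1) / 2)"
    for \<beta> :: real
    using odd_golden_ratio_factor(1)[where k = k and \<beta> = \<beta>] unfolding s_def .
  have cofactor_pos: "0 < \<beta> + (s - real k - 1) / 2" if "1 < \<beta>" for \<beta> :: real
    using \<open>real k + 1 < s\<close> that by (simp add: field_simps)
  have below: "\<beta>\<^sup>2 < (real k + 1) * (\<beta> + 1)" if "1 < \<beta>" "\<beta> < (real k + 1 + s) / 2" for \<beta> :: real
  proof -
    have "(\<beta> - (real k + 1 + s) / 2) * (\<beta> + (s - real k - 1) / 2) < 0"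
      using that cofactor_pos by (intro mult_neg_pos) simp_all
    then show ?thesis
      using factor[of \<beta>] by linarith
  qed
  have above: "(real k + 1) * (\<beta> + 1) < \<beta>\<^sup>2" if "1 < \<beta>" "(real k + 1 + s) / 2 < \<beta>" for \<beta> :: real
  proof -
    have "0 < (\<beta> - (real k + 1 + s) / 2) * (\<beta> + (s - real k - 1) / 2)"
      using that cofactor_pos by (intro mult_pos_pos) simp_all
    then show ?thesis
      using factor[of \<beta>] by linarith
  qed
  have "1 < (real k + 1 + s) / 2"
    using \<open>real k + 1 < s\<close> by simp
  then show ?thesis
    unfolding gen_golden_ratio_def s_def[symmetric]
    using uncountable_expansions_odd below unique_expansion_odd above by auto
qed

theorem theorem1p1:
  fixes m :: nat
  assumes "m \<ge> 1"
  shows "(\<forall>k. m = 2 * k \<longrightarrow> gen_golden_ratio m (real k + 1)) \<and>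
         (\<forall>k. m = 2 * k + 1 \<longrightarrow>
              gen_golden_ratio m ((real k + 1 + sqrt (real k ^ 2 + 6 * real k + 5)) / 2))"
  using gen_golden_ratio_even gen_golden_ratio_odd assms by auto

end
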